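(* Let $X$ and $Y$ be metric spaces. Assume that $A(X)$ is an adequate subspace of $C(X)$ and that either (a) $A(X)=A^{\mathrm{loc}}(X)$ or $A(X)=A^{\mathrm{loc}}_b(X)$, or (b) $X$ is complete and for every separated sequence $(x_n)$ in $X$ there exists $f\in A(X)$ with $f(x_{2n})=1$ and $f(x_{2n-1})=0$ for all $n$. Assume likewise that $A(Y)$ is an adequate subspace of $C(Y)$ satisfying (a) or (b) with $Y$ in place of $X$. If $T:A(X)\to A(Y)$ is a linear order isomorphism such that $T(A_b(X))=A_b(Y)$, then there is a homeomorphism $h:X\to Y$ such that $Tf = T1_X\cdot (f\circ h^{-1})$ and $T^{-1}g = T^{-1}1_Y\cdot (g\circ h)$ for all $f\in A(X)$ and $g\in A(Y)$.
   Context: All functions are real-valued; $1_X$ is the constant $1$. $A(X)\subseteq C(X)$ separates points from closed sets if for every $x\in X$ and closed $F\not\ni x$ there is $f\in A(X)$ with $f(x)=1$, $f=0$ on $F$. $A(X)$ is adequate if (a) it separates points from closed sets and contains the constants; (b) there is a continuous nondecreasing $g:\mathbb{R}\to\mathbb{R}$ with $g(t)=0$ for $t\le0$, $g(t)=1$ for $t\ge1$, and $g\circ f\in A(X)$ for all $f\in A(X)$; (c) every $f\in A(X)$ is a difference of two nonnegative elements of $A(X)$. $A_b(X)$ is the set of bounded functions in $A(X)$. $A^{\mathrm{loc}}(X)$ is the space of real functions $f$ on $X$ such that every $x_0\in X$ has a neighborhood $U$ and some $g\in A(X)$ with $f=g$ on $U$; $A^{\mathrm{loc}}_b(X)$ is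 its bounded part. A sequence in a metric space is separated if there is $\varepsilon>0$ such that any two distinct points of it are at distance $\ge\varepsilon$. A linear bijection $T$ is an order isomorphism if $f\ge0\iff Tf\ge0$. *)

theory Defs
  imports "HOL-Analysis.Analysis"
begin

text \<open>The metric space X is modelled as the whole of a type of class metric_space.
  Functions are real-valued functions on that type.\<close>

definition lin_subspace_C :: "('a::metric_space \<Rightarrow> real) set \<Rightarrow> bool" where
  "lin_subspace_C A \<longleftrightarrow>
     (\<forall>f\<in>A. continuous_on UNIV f) \<and>
     (\<lambda>_. 0) \<in> A \<and>
     (\<forall>f\<in>A. \<forall>g\<in>A. (\<lambda>x. f x + g x) \<in> A) \<and>
     (\<forall>f\<in>A. \<forall>c::real. (\<lambda>x. c * f x) \<in> A)"

definition separates_points_closed :: "('a::topological_space \<Rightarrow> real) set \<Rightarrow> bool" where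
  "separates_points_closed A \<longleftrightarrow>
     (\<forall>x F. closed F \<and> x \<notin> F \<longrightarrow> (\<exists>f\<in>A. f x = 1 \<and> (\<forall>y\<in>F. f y = 0)))"

definition adequate :: "('a::metric_space \<Rightarrow> real) set \<Rightarrow> bool" where
  "adequate A \<longleftrightarrow>
     lin_subspace_C A \<and>
     separates_points_closed A \<and> (\<forall>c. (\<lambda>_. c) \<in> A) \<and>
     (\<exists>g::real \<Rightarrow> real. continuous_on UNIV g \<and> mono g \<and>
        (\<forall>t\<le>0. g t = 0) \<and> (\<forall>t\<ge>1. g t = 1) \<and> (\<forall>f\<in>A. g \<circ> f \<in> A)) \<and>
     (\<forall>f\<in>A. \<exists>u\<in>A. \<exists>v\<in>A. (\<forall>x. u x \<ge> 0) \<and> (\<forall>x. v x \<ge> 0) \<and> f = (\<lambda>x. u x - v x))"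

definition bounded_part :: "('a \<Rightarrow> real) set \<Rightarrow> ('a \<Rightarrow> real) set" where
  "bounded_part A = {f\<in>A. bounded (range f)}"

definition loc_space :: "('a::topological_space \<Rightarrow> real) set \<Rightarrow> ('a \<Rightarrow> real) set" where
  "loc_space A = {f. \<forall>x0. \<exists>U. open U \<and> x0 \<in> U \<and> (\<exists>g\<in>A. \<forall>x\<in>U. f x = g x)}"

definition separated_seq :: "(nat \<Rightarrow> 'a::metric_space) \<Rightarrow> bool" where
  "separated_seq x \<longleftrightarrow> (\<exists>\<epsilon>>0. \<forall>m n. m \<noteq> n \<longrightarrow> dist (x m) (x n) \<ge> \<epsilon>)"

text \<open>Conditions (a) or (b) of the theorem. Sequences are indexed from 0, so the
  paper's x_1, x_2, ... correspond to x 0, x 1, ...; hence x_{2n} = x (2m+1) and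
  x_{2n-1} = x (2m).\<close>
definition cond_a_or_b :: "('a::metric_space \<Rightarrow> real) set \<Rightarrow> bool" where
  "cond_a_or_b A \<longleftrightarrow>
     (A = loc_space A \<or> A = bounded_part (loc_space A)) \<or>
     (complete (UNIV :: 'a set) \<and>
      (\<forall>x. separated_seq x \<longrightarrow>
         (\<exists>f\<in>A. \<forall>m. f (x (2*m+1)) = 1 \<and> f (x (2*m)) = 0)))"

definition order_iso :: "('a \<Rightarrow> real) set \<Rightarrow> ('b \<Rightarrow> real) set \<Rightarrow>
     (('a \<Rightarrow> real) \<Rightarrow> ('b \<Rightarrow> real)) \<Rightarrow> bool" where
  "order_iso AX AY T \<longleftrightarrow>
     bij_betw T AX AY \<and>
     (\<forall>f\<in>AX. \<forall>g\<in>AX. T (\<lambda>x. f x + g x) = (\<lambda>y. T f y + T g y)) \<and>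
     (\<forall>f\<in>AX. \<forall>c::real. T (\<lambda>x. c * f x) = (\<lambda>y. c * T f y)) \<and>
     (\<forall>f\<in>AX. (\<forall>x. f x \<ge> 0) \<longleftrightarrow> (\<forall>y. T f y \<ge> 0))"

end

theory Submission
  imports Defs
begin

text \<open>For \<open>y \<in> Y\<close> the map \<open>f \<mapsto> T f y\<close> is a positive functional, and \<open>T\<close> preserves
  disjointness of supports. Pulling back bumps shrinking to \<open>y\<close> gives points \<open>x\<^sub>m\<close> of
  \<open>X\<close> which either cluster, and then the cluster point \<open>k y\<close> supports the functional, or
  escape to infinity; in the latter case (a) or (b) yields two disjointly supported functions
  whose images are both positive at \<open>y\<close>, which is impossible. At a support point
  \<open>T f y = T 1 y \<cdot> f (k y)\<close> for bounded \<open>f\<close> and \<open>\<ge>\<close> holds for nonnegative \<open>f\<close>, and the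
  support map \<open>k\<close> is continuous. The same for \<open>T\<^sup>-\<^sup>1\<close> gives \<open>h\<close>; testing on bumps shows
  that \<open>h\<close> and \<open>k\<close> are inverse to each other, and then the two inequalities for
  nonnegative functions, with reciprocal weights, are equalities.\<close>

section \<open>Adequate spaces\<close>

lemma adequate_continuous: "adequate A \<Longrightarrow> f \<in> A \<Longrightarrow> continuous_on UNIV f"
  by (simp add: adequate_def lin_subspace_C_def)

lemma adequate_add: "adequate A \<Longrightarrow> f \<in> A \<Longrightarrow> g \<in> A \<Longrightarrow> (\<lambda>x. f x + g x) \<in> A"
  by (simp add: adequate_def lin_subspace_C_def)

lemma adequate_scale: "adequate A \<Longrightarrow> f \<in> A \<Longrightarrow> (\<lambda>x. c * f x) \<in> A"
  by (simp add: adequate_def lin_subspace_C_def)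

lemma adequate_const: "adequate A \<Longrightarrow> (\<lambda>_. c) \<in> A"
  by (simp add: adequate_def)

lemma adequate_diff: "adequate A \<Longrightarrow> f \<in> A \<Longrightarrow> g \<in> A \<Longrightarrow> (\<lambda>x. f x - g x) \<in> A"
  using adequate_add[of A f "\<lambda>x. (-1) * g x"] adequate_scale[of A g "-1"] by simp

lemma adequate_affine: "adequate A \<Longrightarrow> f \<in> A \<Longrightarrow> (\<lambda>x. a * f x + c) \<in> A"
  using adequate_add adequate_scale adequate_const by blast

lemma adequate_sum:
  assumes "adequate A" "finite I" "\<And>i. i \<in> I \<Longrightarrow> b i \<in> A"
  shows "(\<lambda>z. \<Sum>i\<in>I. b i z) \<in> A"
  using assms(2,3)
proof (induction I rule: finite_induct)
  case empty
  then show ?case using adequate_const[OF assms(1), of 0] by simp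
next
  case (insert i I)
  then show ?case using adequate_add[OF assms(1), of "b i" "\<lambda>z. \<Sum>i\<in>I. b i z"] by simp
qed

lemma adequate_separates:
  "adequate A \<Longrightarrow> closed F \<Longrightarrow> x \<notin> F \<Longrightarrow> \<exists>f\<in>A. f x = 1 \<and> (\<forall>y\<in>F. f y = 0)"
  by (simp add: adequate_def separates_points_closed_def)

lemma adequate_decompose:
  "adequate A \<Longrightarrow> f \<in> A \<Longrightarrow>
   \<exists>u\<in>A. \<exists>v\<in>A. (\<forall>x. u x \<ge> 0) \<and> (\<forall>x. v x \<ge> 0) \<and> f = (\<lambda>x. u x - v x)"
  by (simp add: adequate_def)

lemma adequate_cutoffE:
  assumes "adequate A"
  obtains G :: "real \<Rightarrow> real" where "\<And>t. 0 \<le> G t" "\<And>t. G t \<le> 1"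
    "\<And>t. t \<le> 0 \<Longrightarrow> G t = 0" "\<And>t. 1 \<le> t \<Longrightarrow> G t = 1" "\<And>f. f \<in> A \<Longrightarrow> (\<lambda>x. G (f x)) \<in> A"
proof -
  obtain G :: "real \<Rightarrow> real" where G: "mono G" "\<forall>t\<le>0. G t = 0" "\<forall>t\<ge>1. G t = 1"
      "\<forall>f\<in>A. G \<circ> f \<in> A"
    using assms unfolding adequate_def by blast
  have "G 0 \<le> G t" "G t \<le> G 1" if "0 \<le> t" "t \<le> 1" for t
    using G(1) that by (auto simp: mono_def)
  then have "0 \<le> G t \<and> G t \<le> 1" for t
    using G(2,3) by (cases "t \<le> 0"; cases "1 \<le> t") fastforce+
  then show ?thesis using that[of G] G(2-4) by (auto simp: o_def)
qed

lemma bounded_partI: "b \<in> A \<Longrightarrow> (\<And>z. \<bar>b z\<bar> \<le> K) \<Longrightarrow> b \<in> bounded_part A"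
  unfolding bounded_part_def bounded_iff by auto

lemma adequate_bump:
  assumes "adequate A" "open U" "x \<in> U"
  shows "\<exists>b\<in>A. (\<forall>z. 0 \<le> b z \<and> b z \<le> 1) \<and> b x = 1 \<and> (\<forall>z. z \<notin> U \<longrightarrow> b z = 0) \<and>
    (\<exists>s>0. \<forall>z. dist x z < s \<longrightarrow> b z = 1)"
proof -
  obtain G where G: "\<And>t. 0 \<le> G t" "\<And>t. G t \<le> 1" "\<And>t. t \<le> 0 \<Longrightarrow> G t = 0"
    "\<And>t. 1 \<le> t \<Longrightarrow> G t = 1" "\<And>f. f \<in> A \<Longrightarrow> (\<lambda>x. G (f x)) \<in> A"
    using adequate_cutoffE[OF assms(1)] by blast
  obtain \<phi> where \<phi>: "\<phi> \<in> A" "\<phi> x = 1" "\<forall>y\<in>-U. \<phi> y = 0"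
    using adequate_separates[OF assms(1), of "-U"] assms(2,3) by auto
  obtain s where s: "s > 0" "\<forall>z. dist z x < s \<longrightarrow> dist (\<phi> z) (\<phi> x) < 1/2"
    using adequate_continuous[OF assms(1) \<phi>(1)] unfolding continuous_on_iff
    by (metis UNIV_I half_gt_zero_iff zero_less_one)
  have "G (2 * \<phi> z) = 1" if "dist x z < s" for z
  proof -
    have "dist (\<phi> z) 1 < 1/2" using s(2) that \<phi>(2) by (simp add: dist_commute)
    then have "1 \<le> 2 * \<phi> z" by (simp add: dist_real_def abs_if split: if_splits)
    then show ?thesis using G(4) by blast
  qed
  then show ?thesis
    using G \<phi> s(1) adequate_scale[OF assms(1) \<phi>(1)]
    by (intro bexI[of _ "\<lambda>z. G (2 * \<phi> z)"]) auto
qed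

section \<open>Order isomorphisms\<close>

lemma order_iso_in: "order_iso A B T \<Longrightarrow> f \<in> A \<Longrightarrow> T f \<in> B"
  unfolding order_iso_def bij_betw_def by blast

lemma order_iso_surj: "order_iso A B T \<Longrightarrow> g \<in> B \<Longrightarrow> \<exists>f\<in>A. T f = g"
  unfolding order_iso_def bij_betw_def by blast

lemma order_iso_inv_into_inverse:
  "order_iso A B T \<Longrightarrow> g \<in> B \<Longrightarrow> inv_into A T g \<in> A \<and> T (inv_into A T g) = g"
  unfolding order_iso_def bij_betw_def by (auto intro: inv_into_into f_inv_into_f)

lemma order_iso_inv_into_apply: "order_iso A B T \<Longrightarrow> f \<in> A \<Longrightarrow> inv_into A T (T f) = f"
  unfolding order_iso_def bij_betw_def by simp

lemma order_iso_add:
  "order_iso A B T \<Longrightarrow> f \<in> A \<Longrightarrow> g \<in> A \<Longrightarrow> T (\<lambda>x. f x + g x) = (\<lambda>y. T f y + T g y)"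
  by (simp add: order_iso_def)

lemma order_iso_scale: "order_iso A B T \<Longrightarrow> f \<in> A \<Longrightarrow> T (\<lambda>x. c * f x) = (\<lambda>y. c * T f y)"
  by (simp add: order_iso_def)

lemma order_iso_nonneg_iff:
  "order_iso A B T \<Longrightarrow> f \<in> A \<Longrightarrow> (\<forall>x. 0 \<le> f x) \<longleftrightarrow> (\<forall>y. 0 \<le> T f y)"
  by (simp add: order_iso_def)

lemma order_iso_zero: "adequate A \<Longrightarrow> order_iso A B T \<Longrightarrow> T (\<lambda>_. 0) = (\<lambda>_. 0)"
  using order_iso_scale[of A B T "\<lambda>_. 0" 0] adequate_const[of A 0] by simp

lemma order_iso_const:
  "adequate A \<Longrightarrow> order_iso A B T \<Longrightarrow> T (\<lambda>_. c) = (\<lambda>y. c * T (\<lambda>_. 1) y)"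
  using order_iso_scale[of A B T "\<lambda>_. 1" c] adequate_const[of A 1] by simp

lemma order_iso_diff:
  assumes "adequate A" "order_iso A B T" "f \<in> A" "g \<in> A"
  shows "T (\<lambda>x. f x - g x) = (\<lambda>y. T f y - T g y)"
  using order_iso_add[OF assms(2,3) adequate_scale[OF assms(1,4)], of "-1"]
    order_iso_scale[OF assms(2,4), of "-1"] by simp

lemma order_iso_le_iff:
  assumes "adequate A" "order_iso A B T" "f \<in> A" "g \<in> A"
  shows "(\<forall>x. f x \<le> g x) \<longleftrightarrow> (\<forall>y. T f y \<le> T g y)"
  using order_iso_nonneg_iff[OF assms(2) adequate_diff[OF assms(1,4,3)]]
    order_iso_diff[OF assms(1,2,4,3)] by simp

lemma order_iso_inv_into:
  assumes "order_iso A B T" "adequate A"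
  shows "order_iso B A (inv_into A T)"
proof -
  let ?S = "inv_into A T"
  have S: "?S g \<in> A" "T (?S g) = g" if "g \<in> B" for g
    using order_iso_inv_into_inverse[OF assms(1) that] by auto
  have "?S (\<lambda>y. f y + g y) = (\<lambda>x. ?S f x + ?S g x)" if "f \<in> B" "g \<in> B" for f g
  proof -
    have "T (\<lambda>x. ?S f x + ?S g x) = (\<lambda>y. f y + g y)"
      using order_iso_add[OF assms(1) S(1) S(1)] S(2) that by simp
    then show ?thesis
      using order_iso_inv_into_apply[OF assms(1) adequate_add[OF assms(2) S(1)[OF that(1)] S(1)[OF that(2)]]] by simp
  qed
  moreover have "?S (\<lambda>y. c * f y) = (\<lambda>x. c * ?S f x)" if "f \<in> B" for f c
  proof -
    have "T (\<lambda>x. c * ?S f x) = (\<lambda>y. c * f y)"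
      using order_iso_scale[OF assms(1) S(1)] S(2) that by simp
    then show ?thesis
      using order_iso_inv_into_apply[OF assms(1) adequate_scale[OF assms(2) S(1)[OF that], of c]] by simp
  qed
  moreover have "(\<forall>y. 0 \<le> f y) \<longleftrightarrow> (\<forall>x. 0 \<le> ?S f x)" if "f \<in> B" for f
    using order_iso_nonneg_iff[OF assms(1) S(1)[OF that]] S(2)[OF that] by simp
  moreover have "bij_betw ?S B A"
    using assms(1) bij_betw_inv_into unfolding order_iso_def by blast
  ultimately show ?thesis unfolding order_iso_def by blast
qed

lemma order_iso_inv_into_bounded_part:
  assumes "order_iso A B T" "T ` bounded_part A = bounded_part B"
  shows "inv_into A T ` bounded_part B = bounded_part A"
proof -
  have "inj_on T A" using assms(1) unfolding order_iso_def bij_betw_def by blast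
  moreover have "bounded_part A \<subseteq> A" by (auto simp: bounded_part_def)
  ultimately show ?thesis using inv_into_image_cancel assms(2) by metis
qed

text \<open>Order isomorphisms preserve disjointness of supports: a positive common lower bound
  of \<open>T f\<close> and \<open>T g\<close> near a point pulls back to a nonzero common lower bound of
  \<open>f\<close> and \<open>g\<close>.\<close>
lemma order_iso_disjoint:
  assumes A: "adequate A" and B: "adequate B" and T: "order_iso A B T"
    and f: "f \<in> A" "\<forall>x. 0 \<le> f x" and g: "g \<in> A" "\<forall>x. 0 \<le> g x"
    and disj: "\<forall>x. f x = 0 \<or> g x = 0"
  shows "T f y = 0 \<or> T g y = 0"
proof (rule ccontr)
  assume "\<not> ?thesis"
  moreover have "0 \<le> T f y" "0 \<le> T g y"
    using order_iso_nonneg_iff[OF T f(1)] order_iso_nonneg_iff[OF T g(1)] f(2) g(2) by auto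
  ultimately have pos: "0 < T f y" "0 < T g y" by auto
  define c where "c = min (T f y) (T g y) / 2"
  have c: "0 < c" "c < T f y" "c < T g y" using pos by (auto simp: c_def)
  let ?U = "{z. c < T f z} \<inter> {z. c < T g z}"
  have "open ?U"
    using adequate_continuous[OF B order_iso_in[OF T f(1)]]
      adequate_continuous[OF B order_iso_in[OF T g(1)]]
    by (intro open_Int open_Collect_less) (auto intro: continuous_on_const)
  then obtain b where b: "b \<in> B" "\<forall>z. 0 \<le> b z \<and> b z \<le> 1" "b y = 1"
      "\<forall>z. z \<notin> ?U \<longrightarrow> b z = 0"
    using adequate_bump[OF B, of ?U y] c by auto
  obtain q where q: "q \<in> A" "T q = (\<lambda>z. c * b z)"
    using order_iso_surj[OF T adequate_scale[OF B b(1)]] by blast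
  have below: "c * b z \<le> T h z" if "h \<in> A" "\<forall>x. 0 \<le> h x" "\<forall>z\<in>?U. c < T h z" for h z
  proof (cases "z \<in> ?U")
    case True
    then have "c < T h z" using that(3) by blast
    moreover have "c * b z \<le> c" using b(2) c(1) by (simp add: mult_left_le)
    ultimately show ?thesis by linarith
  next
    case False
    then show ?thesis using b(4) order_iso_nonneg_iff[OF T that(1)] that(2) by simp
  qed
  have "\<forall>x. q x \<le> f x" "\<forall>x. q x \<le> g x"
    using order_iso_le_iff[OF A T q(1) f(1)] order_iso_le_iff[OF A T q(1) g(1)]
      below[OF f] below[OF g] q(2) by auto
  moreover have "\<forall>x. 0 \<le> q x" using order_iso_nonneg_iff[OF T q(1)] q(2) b(2) c(1) by simp
  ultimately have "q = (\<lambda>_. 0)" using disj by (metis order_antisym)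
  then show False using q(2) b(3) c(1) order_iso_zero[OF A T] by (metis mult_cancel_left1 less_irrefl)
qed

section \<open>Sequences without cluster points\<close>

definition no_cluster_point :: "(nat \<Rightarrow> 'a::metric_space) \<Rightarrow> bool" where
  "no_cluster_point xs \<longleftrightarrow> (\<forall>x. \<exists>r>0. \<forall>\<^sub>F m in sequentially. r \<le> dist x (xs m))"

lemma frequently_sequentiallyI: "(\<And>N. N \<le> k N) \<Longrightarrow> (\<And>N. P (k N)) \<Longrightarrow> \<exists>\<^sub>F n in sequentially. P n"
  unfolding frequently_sequentially by blast

lemma no_cluster_point_subseq:
  assumes "no_cluster_point xs" "strict_mono \<sigma>"
  shows "no_cluster_point (xs \<circ> \<sigma>)"
  unfolding no_cluster_point_def
proof
  fix x
  obtain r where "r > 0" "\<forall>\<^sub>F m in sequentially. r \<le> dist x (xs m)"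
    using assms(1) unfolding no_cluster_point_def by blast
  then show "\<exists>r>0. \<forall>\<^sub>F m in sequentially. r \<le> dist x ((xs \<circ> \<sigma>) m)"
    using eventually_compose_filterlim[OF _ filterlim_subseq[OF assms(2)]] by auto
qed

lemma no_cluster_point_not_totally_bounded:
  fixes xs :: "nat \<Rightarrow> 'a::metric_space"
  assumes complete: "complete (UNIV :: 'a set)" and nc: "no_cluster_point xs"
  shows "\<exists>\<epsilon>>0. \<forall>K. finite K \<longrightarrow> (\<exists>m. \<forall>k\<in>K. \<epsilon> \<le> dist k (xs m))"
proof (rule ccontr)
  assume "\<not> ?thesis"
  then have tb: "\<forall>\<epsilon>>0. \<exists>K. finite K \<and> (\<forall>m. \<exists>k\<in>K. dist k (xs m) < \<epsilon>)"
    by (meson not_le)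
  let ?C = "closure (range xs)"
  have "compact ?C" unfolding compact_eq_totally_bounded
  proof (intro conjI allI impI)
    show "complete ?C" using complete_closed_subset[OF closed_closure _ complete] by blast
  next
    fix \<epsilon> :: real assume "\<epsilon> > 0"
    then obtain K where K: "finite K" "\<forall>m. \<exists>k\<in>K. dist k (xs m) < \<epsilon>/2"
      using tb half_gt_zero by blast
    have "range xs \<subseteq> (\<Union>k\<in>K. cball k (\<epsilon>/2))"
    proof
      fix x assume "x \<in> range xs"
      then obtain m where "x = xs m" by blast
      then obtain k where "k \<in> K" "dist k x < \<epsilon>/2" using K(2) by blast
      then show "x \<in> (\<Union>k\<in>K. cball k (\<epsilon>/2))" by (auto intro!: bexI[of _ k])
    qed
    moreover have "closed (\<Union>k\<in>K. cball k (\<epsilon>/2))" using K(1) by (intro closed_UN) auto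
    ultimately have "?C \<subseteq> (\<Union>k\<in>K. cball k (\<epsilon>/2))" by (rule closure_minimal)
    also have "\<dots> \<subseteq> (\<Union>k\<in>K. ball k \<epsilon>)" using \<open>\<epsilon> > 0\<close> by auto
    finally show "\<exists>K. finite K \<and> ?C \<subseteq> (\<Union>x\<in>K. ball x \<epsilon>)" using K(1) by blast
  qed
  then have "seq_compact ?C" by (rule compact_imp_seq_compact)
  moreover have "\<forall>n. xs n \<in> ?C" by (simp add: closure_subset[THEN subsetD])
  ultimately obtain l r where lr: "strict_mono (r :: nat \<Rightarrow> nat)" "(xs \<circ> r) \<longlonglongrightarrow> l"
    by (rule seq_compactE)
  obtain \<delta> where \<delta>: "\<delta> > 0" "\<forall>\<^sub>F m in sequentially. \<delta> \<le> dist l ((xs \<circ> r) m)"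
    using no_cluster_point_subseq[OF nc lr(1)] unfolding no_cluster_point_def by blast
  have "\<forall>\<^sub>F m in sequentially. dist ((xs \<circ> r) m) l < \<delta>"
    using lr(2) \<delta>(1) unfolding tendsto_iff by blast
  with \<delta>(2) have "\<forall>\<^sub>F m in sequentially. False"
    by eventually_elim (simp add: dist_commute)
  then show False by simp
qed

lemma exists_separated_subsequence:
  fixes xs :: "nat \<Rightarrow> 'a::metric_space"
  assumes "\<exists>\<epsilon>>0. \<forall>K. finite K \<longrightarrow> (\<exists>m. \<forall>k\<in>K. \<epsilon> \<le> dist k (xs m))"
  obtains \<sigma> where "\<forall>j. j \<le> \<sigma> j" "separated_seq (xs \<circ> \<sigma>)"
proof -
  obtain \<epsilon> where \<epsilon>: "\<epsilon> > 0" "\<forall>K. finite K \<longrightarrow> (\<exists>m. \<forall>k\<in>K. \<epsilon> \<le> dist k (xs m))"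
    using assms by blast
  define pick where "pick K j = (SOME m. j \<le> m \<and> (\<forall>k\<in>K. \<epsilon> \<le> dist k (xs m)))" for K j
  have pick: "j \<le> pick K j \<and> (\<forall>k\<in>K. \<epsilon> \<le> dist k (xs (pick K j)))" if "finite K" for K j
  proof -
    have "finite (K \<union> xs ` {..<j})" using \<open>finite K\<close> by simp
    then obtain m where m: "\<forall>k\<in>K \<union> xs ` {..<j}. \<epsilon> \<le> dist k (xs m)"
      using \<epsilon>(2) by blast
    have "j \<le> m"
    proof (rule ccontr)
      assume "\<not> j \<le> m"
      then have "xs m \<in> K \<union> xs ` {..<j}" by auto
      then have "\<epsilon> \<le> dist (xs m) (xs m)" using m by blast
      then show False using \<epsilon>(1) by simp
    qed
    then have "\<exists>m. j \<le> m \<and> (\<forall>k\<in>K. \<epsilon> \<le> dist k (xs m))" using m by blast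
    then show ?thesis unfolding pick_def by (rule someI_ex)
  qed
  define D where "D = rec_nat {} (\<lambda>j D. insert (xs (pick D j)) D)"
  define \<sigma> where "\<sigma> j = pick (D j) j" for j
  have D_0: "D 0 = {}" and D_Suc: "D (Suc j) = insert (xs (\<sigma> j)) (D j)" for j
    by (simp_all add: D_def \<sigma>_def)
  have D_eq: "D j = (xs \<circ> \<sigma>) ` {..<j}" for j
    by (induction j) (simp_all add: D_0 D_Suc lessThan_Suc)
  have "finite (D j)" for j using D_eq by simp
  then have \<sigma>: "j \<le> \<sigma> j \<and> (\<forall>k\<in>D j. \<epsilon> \<le> dist k (xs (\<sigma> j)))" for j
    using pick by (simp add: \<sigma>_def)
  have "\<epsilon> \<le> dist (xs (\<sigma> i)) (xs (\<sigma> j))" if "i < j" for i j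
    using \<sigma>[of j] D_eq[of j] that by auto
  then have "\<epsilon> \<le> dist ((xs \<circ> \<sigma>) i) ((xs \<circ> \<sigma>) j)" if "i \<noteq> j" for i j
    using that by (metis comp_apply dist_commute linorder_neqE_nat)
  then have "separated_seq (xs \<circ> \<sigma>)" unfolding separated_seq_def using \<epsilon>(1) by blast
  then show ?thesis using \<sigma> by (intro that) auto
qed

lemma oscillating_of_separated:
  fixes A :: "('a::metric_space \<Rightarrow> real) set"
  assumes "complete (UNIV :: 'a set)" "no_cluster_point xs"
    and "\<forall>x. separated_seq x \<longrightarrow> (\<exists>f\<in>A. \<forall>m. f (x (2*m+1)) = 1 \<and> f (x (2*m)) = 0)"
  shows "\<exists>f\<in>A. (\<exists>\<^sub>F m in sequentially. f (xs m) = 1) \<and> (\<exists>\<^sub>F m in sequentially. f (xs m) = 0)"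
proof -
  obtain \<sigma> where \<sigma>: "\<forall>j. j \<le> \<sigma> j" "separated_seq (xs \<circ> \<sigma>)"
    by (rule exists_separated_subsequence[OF no_cluster_point_not_totally_bounded[OF assms(1,2)]])
  have "\<exists>f\<in>A. \<forall>m. f ((xs \<circ> \<sigma>) (2*m+1)) = 1 \<and> f ((xs \<circ> \<sigma>) (2*m)) = 0"
    using assms(3) \<sigma>(2) by blast
  then obtain f where "f \<in> A" "\<forall>m. f (xs (\<sigma> (2*m+1))) = 1 \<and> f (xs (\<sigma> (2*m))) = 0"
    by auto
  moreover have "N \<le> \<sigma> (2*N+1)" "N \<le> \<sigma> (2*N)" for N
    using \<sigma>(1)[rule_format, of "2*N+1"] \<sigma>(1)[rule_format, of "2*N"] by linarith+
  ultimately show ?thesis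
    using frequently_sequentiallyI[of "\<lambda>N. \<sigma> (2*N+1)" "\<lambda>m. f (xs m) = 1"]
      frequently_sequentiallyI[of "\<lambda>N. \<sigma> (2*N)" "\<lambda>m. f (xs m) = 0"] by blast
qed

lemma no_cluster_point_spread_subsequence:
  assumes "no_cluster_point xs"
  obtains \<sigma> :: "nat \<Rightarrow> nat" and r where "strict_mono \<sigma>" "\<forall>i. 0 < r i"
    "\<forall>i j. i < j \<longrightarrow> r i \<le> dist (xs (\<sigma> i)) (xs (\<sigma> j))"
proof -
  obtain r N where r: "\<And>x. 0 < r x" and N: "\<And>x m. N x \<le> m \<Longrightarrow> r x \<le> dist x (xs m)"
    using assms unfolding no_cluster_point_def eventually_sequentially by metis
  define N' where "N' n = Max ((\<lambda>i. N (xs i)) ` {..n})" for n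
  have N_le: "N (xs i) \<le> N' i" for i by (simp add: N'_def)
  have N'_mono: "N' m \<le> N' n" if "m \<le> n" for m n
    unfolding N'_def using that by (intro Max_mono) auto
  \<comment> \<open>each new index lies beyond the escape times of all points chosen so far\<close>
  define \<sigma> where "\<sigma> = rec_nat 0 (\<lambda>_ s. max (Suc s) (N' s))"
  have \<sigma>_Suc: "\<sigma> (Suc j) = max (Suc (\<sigma> j)) (N' (\<sigma> j))" for j by (simp add: \<sigma>_def)
  have mono: "strict_mono \<sigma>" unfolding strict_mono_Suc_iff \<sigma>_Suc by (simp add: less_max_iff_disj)
  have "r (xs (\<sigma> i)) \<le> dist (xs (\<sigma> i)) (xs (\<sigma> j))" if "i < j" for i j
  proof -
    obtain j' where j': "j = Suc j'" "i \<le> j'" using \<open>i < j\<close> less_iff_Suc_add by auto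
    have "N (xs (\<sigma> i)) \<le> N' (\<sigma> j')"
      using N_le N'_mono strict_mono_less_eq[OF mono] j'(2) le_trans by blast
    also have "\<dots> \<le> \<sigma> j" using j'(1) \<sigma>_Suc by simp
    finally show ?thesis by (rule N)
  qed
  then show ?thesis using that[OF mono, of "\<lambda>i. r (xs (\<sigma> i))"] r by blast
qed

lemma no_cluster_point_locally_finite_balls:
  fixes ys :: "nat \<Rightarrow> 'a::metric_space"
  assumes nc: "no_cluster_point ys" and \<rho>: "\<rho> \<longlonglongrightarrow> 0"
  shows "\<exists>\<delta>>0. \<forall>\<^sub>F j in sequentially. ball x \<delta> \<inter> ball (ys j) (\<rho> j) = {}"
proof -
  obtain s where s: "0 < s" "\<forall>\<^sub>F j in sequentially. s \<le> dist x (ys j)"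
    using nc unfolding no_cluster_point_def by blast
  have "\<forall>\<^sub>F j in sequentially. \<rho> j < s / 2"
    using order_tendstoD(2)[OF \<rho> half_gt_zero[OF s(1)]] .
  with s(2) have "\<forall>\<^sub>F j in sequentially. ball x (s / 2) \<inter> ball (ys j) (\<rho> j) = {}"
  proof eventually_elim
    case (elim j)
    have False if "z \<in> ball x (s / 2)" "z \<in> ball (ys j) (\<rho> j)" for z
    proof -
      have "dist x (ys j) \<le> dist x z + dist (ys j) z"
        using dist_triangle[of x "ys j" z] by (simp add: dist_commute)
      then show False using that elim unfolding mem_ball by linarith
    qed
    then show ?case by blast
  qed
  then show ?thesis using s(1) half_gt_zero by blast
qed

lemma no_cluster_point_disjoint_balls:
  fixes ys :: "nat \<Rightarrow> 'a::metric_space"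
  assumes nc: "no_cluster_point ys" and r: "\<forall>i. 0 < r i"
    and spread: "\<forall>i j. i < j \<longrightarrow> r i \<le> dist (ys i) (ys j)"
  obtains \<rho> where "\<forall>j. 0 < \<rho> j" "disjoint_family (\<lambda>j. ball (ys j) (\<rho> j))"
    "\<forall>x. \<exists>\<delta>>0. \<forall>\<^sub>F j in sequentially. ball x \<delta> \<inter> ball (ys j) (\<rho> j) = {}"
proof -
  define \<rho> where "\<rho> j = Min ((\<lambda>i. min (r i / 2) (inverse (real (Suc i)))) ` {..j})" for j
  have \<rho>_pos: "0 < \<rho> j" for j unfolding \<rho>_def using r by (subst Min_gr_iff) auto
  have \<rho>_le: "\<rho> j \<le> r i / 2" "\<rho> j \<le> inverse (real (Suc i))" if "i \<le> j" for i j
    using that Min_le[of "(\<lambda>i. min (r i / 2) (inverse (real (Suc i)))) ` {..j}"]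
    unfolding \<rho>_def by fastforce+
  have "ball (ys i) (\<rho> i) \<inter> ball (ys j) (\<rho> j) = {}" if "i < j" for i j
  proof -
    have "\<rho> i + \<rho> j \<le> dist (ys i) (ys j)"
      using \<rho>_le(1)[of i i] \<rho>_le(1)[of i j] spread that by fastforce
    moreover have "dist (ys i) (ys j) \<le> dist (ys i) z + dist (ys j) z" for z
      using dist_triangle[of "ys i" "ys j" z] by (simp add: dist_commute)
    ultimately have False if "z \<in> ball (ys i) (\<rho> i)" "z \<in> ball (ys j) (\<rho> j)" for z
      using that unfolding mem_ball by (smt (verit))
    then show ?thesis by blast
  qed
  then have "disjoint_family (\<lambda>j. ball (ys j) (\<rho> j))"
    unfolding disjoint_family_on_def by (metis Int_commute linorder_neqE_nat)
  moreover have "\<rho> \<longlonglongrightarrow> 0"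
    by (rule tendsto_sandwich[OF always_eventually always_eventually tendsto_const
          LIMSEQ_inverse_real_of_nat])
      (use \<rho>_pos \<rho>_le(2) in \<open>auto intro: less_imp_le\<close>)
  then have "\<exists>\<delta>>0. \<forall>\<^sub>F j in sequentially. ball x \<delta> \<inter> ball (ys j) (\<rho> j) = {}" for x
    by (rule no_cluster_point_locally_finite_balls[OF nc])
  ultimately show ?thesis using that \<rho>_pos by blast
qed

lemma disjoint_family_members_eq:
  "disjoint_family U \<Longrightarrow> i \<in> J \<Longrightarrow> z \<in> U i \<Longrightarrow> {j\<in>J. z \<in> U j} = {i}"
  unfolding disjoint_family_on_def by blast

text \<open>This is where condition (a) enters: the sum of a locally finite family of
  functions in \<open>A\<close> agrees locally with a finite sum.\<close>
lemma locally_finite_sum_in_loc_space: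
  assumes A: "adequate A" "A = loc_space A \<or> A = bounded_part (loc_space A)"
    and b: "\<And>j. b j \<in> A" "\<And>j z. 0 \<le> b j z" "\<And>j z. b j z \<le> 1" "\<And>j z. z \<notin> U j \<Longrightarrow> b j z = 0"
    and U: "disjoint_family U" "\<forall>x. \<exists>\<delta>>0. \<forall>\<^sub>F j in sequentially. ball x \<delta> \<inter> U j = {}"
  shows "(\<lambda>z. \<Sum>j\<in>{j\<in>J. z \<in> U j}. b j z) \<in> A"
proof -
  let ?F = "\<lambda>z. \<Sum>j\<in>{j\<in>J. z \<in> U j}. b j z"
  have "?F \<in> loc_space A" unfolding loc_space_def
  proof (intro CollectI allI)
    fix x
    obtain \<delta> N where \<delta>: "0 < \<delta>" "\<And>j. N \<le> j \<Longrightarrow> ball x \<delta> \<inter> U j = {}"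
      using U(2) unfolding eventually_sequentially by blast
    have "?F z = (\<Sum>j\<in>{j\<in>J. j < N}. b j z)" if "z \<in> ball x \<delta>" for z
    proof (rule sum.mono_neutral_left)
      show "finite {j\<in>J. j < N}" by simp
      show "{j\<in>J. z \<in> U j} \<subseteq> {j\<in>J. j < N}" using \<delta>(2) that not_le by blast
    qed (use b(4) in auto)
    moreover have "(\<lambda>z. \<Sum>j\<in>{j\<in>J. j < N}. b j z) \<in> A"
      by (rule adequate_sum[OF A(1)]) (simp_all add: b(1))
    ultimately show "\<exists>V. open V \<and> x \<in> V \<and> (\<exists>g\<in>A. \<forall>z\<in>V. ?F z = g z)"
      using \<delta>(1) by (intro exI[of _ "ball x \<delta>"]) auto
  qed
  moreover have "\<bar>?F z\<bar> \<le> 1" for z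
  proof (cases "\<exists>i\<in>J. z \<in> U i")
    case True
    then show ?thesis using disjoint_family_members_eq[OF U(1)] b(2,3) by fastforce
  next
    case False
    then have "{j\<in>J. z \<in> U j} = {}" by blast
    then show ?thesis by (metis abs_zero sum.empty zero_le_one)
  qed
  ultimately show ?thesis using A(2) bounded_partI[of ?F "loc_space A" 1] by auto
qed

lemma oscillating_of_loc_space:
  assumes A: "adequate A" "A = loc_space A \<or> A = bounded_part (loc_space A)"
    and nc: "no_cluster_point xs"
  shows "\<exists>f\<in>A. (\<exists>\<^sub>F m in sequentially. f (xs m) = 1) \<and> (\<exists>\<^sub>F m in sequentially. f (xs m) = 0)"
proof -
  obtain \<sigma> :: "nat \<Rightarrow> nat" and r where \<sigma>: "strict_mono \<sigma>" and r: "\<forall>i. 0 < r i"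
    "\<forall>i j. i < j \<longrightarrow> r i \<le> dist (xs (\<sigma> i)) (xs (\<sigma> j))"
    using no_cluster_point_spread_subsequence[OF nc] by blast
  define ys where "ys = xs \<circ> \<sigma>"
  have "no_cluster_point ys" "\<forall>i j. i < j \<longrightarrow> r i \<le> dist (ys i) (ys j)"
    using no_cluster_point_subseq[OF nc \<sigma>] r(2) by (simp_all add: ys_def)
  then obtain \<rho> where \<rho>: "\<forall>j. 0 < \<rho> j" and U: "disjoint_family (\<lambda>j. ball (ys j) (\<rho> j))"
      "\<forall>x. \<exists>\<delta>>0. \<forall>\<^sub>F j in sequentially. ball x \<delta> \<inter> ball (ys j) (\<rho> j) = {}"
    using no_cluster_point_disjoint_balls r(1) by blast
  have "\<forall>j. \<exists>b\<in>A. (\<forall>z. 0 \<le> b z \<and> b z \<le> 1) \<and> b (ys j) = 1 \<and>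
      (\<forall>z. z \<notin> ball (ys j) (\<rho> j) \<longrightarrow> b z = 0)"
    using adequate_bump[OF A(1) open_ball] \<rho> by (meson centre_in_ball)
  then obtain b where b: "\<And>j. b j \<in> A" "\<And>j z. 0 \<le> b j z" "\<And>j z. b j z \<le> 1"
      "\<And>j. b j (ys j) = 1" "\<And>j z. z \<notin> ball (ys j) (\<rho> j) \<Longrightarrow> b j z = 0"
    by metis
  define f where "f z = (\<Sum>j\<in>{j\<in>Collect odd. z \<in> ball (ys j) (\<rho> j)}. b j z)" for z
  have "f \<in> A"
    unfolding f_def
    by (rule locally_finite_sum_in_loc_space[where U="\<lambda>j. ball (ys j) (\<rho> j)", OF A b(1-3) b(5) U])
  moreover have "f (ys j) = (if odd j then 1 else 0)" for j
  proof -
    have ys: "ys j \<in> ball (ys j) (\<rho> j)" using \<rho> by simp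
    have "{i. ys j \<in> ball (ys i) (\<rho> i)} = {j}"
      using disjoint_family_members_eq[OF U(1), of j UNIV] ys by simp
    then have "{i\<in>Collect odd. ys j \<in> ball (ys i) (\<rho> i)} = (if odd j then {j} else {})"
      by auto
    then show ?thesis unfolding f_def using b(4) by simp
  qed
  moreover have "N \<le> \<sigma> (2*N+1)" "N \<le> \<sigma> (2*N)" for N
    using seq_suble[OF \<sigma>, of "2*N+1"] seq_suble[OF \<sigma>, of "2*N"] by linarith+
  ultimately show ?thesis
    using frequently_sequentiallyI[of "\<lambda>N. \<sigma> (2*N+1)" "\<lambda>m. f (xs m) = 1"]
      frequently_sequentiallyI[of "\<lambda>N. \<sigma> (2*N)" "\<lambda>m. f (xs m) = 0"]
    unfolding ys_def by auto
qed

lemma disjoint_pair_of_oscillating: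
  assumes A: "adequate A" and f: "f \<in> A"
    and osc: "\<exists>\<^sub>F m in sequentially. f (xs m) = 1" "\<exists>\<^sub>F m in sequentially. f (xs m) = 0"
  obtains f1 f2 where "f1 \<in> A" "f2 \<in> A" "\<forall>z. 0 \<le> f1 z" "\<forall>z. 0 \<le> f2 z" "\<forall>z. f1 z = 0 \<or> f2 z = 0"
    "\<exists>\<^sub>F m in sequentially. 1 \<le> f1 (xs m)" "\<exists>\<^sub>F m in sequentially. 1 \<le> f2 (xs m)"
proof -
  obtain G where G: "\<And>t. 0 \<le> G t" "\<And>t. t \<le> 0 \<Longrightarrow> G t = 0" "\<And>t. 1 \<le> t \<Longrightarrow> G t = 1"
    "\<And>f. f \<in> A \<Longrightarrow> (\<lambda>x. G (f x)) \<in> A"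
    using adequate_cutoffE[OF A] by metis
  let ?f1 = "\<lambda>z. G (2 * f z + (-1))" and ?f2 = "\<lambda>z. G ((-2) * f z + 1)"
  have "?f1 \<in> A" "?f2 \<in> A" using G(4)[OF adequate_affine[OF A f]] by blast+
  moreover have "?f1 z = 0 \<or> ?f2 z = 0" for z using G(2)[of "2 * f z + (-1)"] G(2)[of "(-2) * f z + 1"] by linarith
  moreover have "\<exists>\<^sub>F m in sequentially. 1 \<le> ?f1 (xs m)" "\<exists>\<^sub>F m in sequentially. 1 \<le> ?f2 (xs m)"
    using frequently_elim1[OF osc(1), of "\<lambda>m. 1 \<le> ?f1 (xs m)"]
      frequently_elim1[OF osc(2), of "\<lambda>m. 1 \<le> ?f2 (xs m)"] G(3) by simp_all
  ultimately show ?thesis using that G(1) by blast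
qed

lemma cond_a_or_b_oscillating:
  assumes "adequate A" "cond_a_or_b A" "no_cluster_point xs"
  shows "\<exists>f\<in>A. (\<exists>\<^sub>F m in sequentially. f (xs m) = 1) \<and> (\<exists>\<^sub>F m in sequentially. f (xs m) = 0)"
  using assms oscillating_of_loc_space oscillating_of_separated unfolding cond_a_or_b_def by blast

section \<open>Support points\<close>

locale adequate_order_iso =
  fixes AX :: "('a::metric_space \<Rightarrow> real) set" and AY :: "('b::metric_space \<Rightarrow> real) set"
    and T :: "('a \<Rightarrow> real) \<Rightarrow> ('b \<Rightarrow> real)"
  assumes AX: "adequate AX" and AY: "adequate AY" and T: "order_iso AX AY T"
    and T_bounded_part: "T ` bounded_part AX = bounded_part AY"
begin

abbreviation weight :: "'b \<Rightarrow> real" where "weight \<equiv> T (\<lambda>_. 1)"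

lemma T_const: "T (\<lambda>_. c) = (\<lambda>y. c * weight y)"
  using order_iso_const[OF AX T] .

lemma T_continuous: "f \<in> AX \<Longrightarrow> continuous_on UNIV (T f)"
  using adequate_continuous[OF AY order_iso_in[OF T]] .

lemma inv_into_adequate_order_iso: "adequate_order_iso AY AX (inv_into AX T)"
  using AX AY order_iso_inv_into[OF T AX] order_iso_inv_into_bounded_part[OF T T_bounded_part]
  by unfold_locales

lemma bounded_part_image: "\<forall>f\<in>bounded_part AX. T f \<in> bounded_part AY \<and> inv_into AX T (T f) = f"
  using T_bounded_part order_iso_inv_into_apply[OF T] by (auto simp: bounded_part_def)

lemma bounded_part_preimage:
  "\<forall>g\<in>bounded_part AY. inv_into AX T g \<in> bounded_part AX \<and> T (inv_into AX T g) = g"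
  using order_iso_inv_into_bounded_part[OF T T_bounded_part] order_iso_inv_into_inverse[OF T]
  by (auto simp: bounded_part_def)

lemma weight_pos: "0 < weight y"
proof -
  obtain g where g: "g \<in> AY" "\<forall>z. 0 \<le> g z \<and> g z \<le> 1" "g y = 1"
    using adequate_bump[OF AY, of UNIV y] by auto
  then have "g \<in> bounded_part AY" by (intro bounded_partI[of _ _ 1]) auto
  then obtain f where f: "f \<in> bounded_part AX" "T f = g"
    using T_bounded_part by (metis (no_types) imageE)
  then obtain M where M: "\<forall>x. \<bar>f x\<bar> \<le> M" and "f \<in> AX"
    unfolding bounded_part_def bounded_iff by auto
  moreover have "\<forall>x. f x \<le> M" using M by (simp add: abs_le_iff)
  ultimately have "\<forall>y. T f y \<le> T (\<lambda>_. M) y"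
    using order_iso_le_iff[OF AX T _ adequate_const[OF AX, of M]] by blast
  then have "1 \<le> M * weight y" using f(2) g(3) T_const by metis
  moreover have "0 \<le> weight y"
    using order_iso_nonneg_iff[OF T adequate_const[OF AX, of 1]] by simp
  ultimately show ?thesis by (metis less_eq_real_def mult_zero_right not_one_le_zero)
qed

text \<open>A bump at \<open>y\<close>, pulled back by \<open>T\<close>, is disjoint from \<open>u\<close> and hence from \<open>a\<close>;
  pushing forward again, \<open>T a\<close> vanishes where the bump is \<open>1\<close>.\<close>
lemma T_vanishes_of_support_subset:
  assumes u: "u \<in> AX" "\<forall>z. 0 \<le> u z" and a: "a \<in> AX" "\<forall>z. 0 \<le> a z" "\<forall>z. a z \<noteq> 0 \<longrightarrow> u z \<noteq> 0"
    and r: "0 < r" "\<forall>z. dist y z < r \<longrightarrow> T u z = 0"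
  shows "T a y = 0"
proof -
  obtain b where b: "b \<in> AY" "\<forall>z. 0 \<le> b z \<and> b z \<le> 1" "b y = 1" "\<forall>z. z \<notin> ball y r \<longrightarrow> b z = 0"
    using adequate_bump[OF AY, of "ball y r" y] r(1) by auto
  obtain v where v: "v \<in> AX" "T v = b" using order_iso_surj[OF T b(1)] by blast
  have v_nonneg: "\<forall>x. 0 \<le> v x" using order_iso_nonneg_iff[OF T v(1)] v(2) b(2) by simp
  have b_nonneg: "\<forall>z. 0 \<le> b z" using b(2) by blast
  have Tu_nonneg: "\<forall>z. 0 \<le> T u z" using order_iso_nonneg_iff[OF T u(1)] u(2) by blast
  have "\<forall>z. b z = 0 \<or> T u z = 0" using b(4) r(2) by auto
  then have "inv_into AX T b x = 0 \<or> inv_into AX T (T u) x = 0" for x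
    using order_iso_disjoint[OF AY AX order_iso_inv_into[OF T AX] b(1) b_nonneg
        order_iso_in[OF T u(1)] Tu_nonneg] by simp
  moreover have "inv_into AX T b = v" "inv_into AX T (T u) = u"
    using order_iso_inv_into_apply[OF T v(1)] order_iso_inv_into_apply[OF T u(1)] v(2) by simp_all
  ultimately have "\<forall>x. v x = 0 \<or> u x = 0" by simp
  with a(3) have "\<forall>x. v x = 0 \<or> a x = 0" by blast
  then have "T v y = 0 \<or> T a y = 0" using order_iso_disjoint[OF AX AY T v(1) v_nonneg a(1,2)] by blast
  then show ?thesis using v(2) b(3) by simp
qed

text \<open>\<open>x\<close> lies in the support of the positive functional \<open>f \<mapsto> T f y\<close>.\<close>
definition support_point :: "'a \<Rightarrow> 'b \<Rightarrow> bool" where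
  "support_point x y \<longleftrightarrow>
     (\<forall>r>0. \<exists>f\<in>AX. (\<forall>z. 0 \<le> f z) \<and> (\<forall>z. r \<le> dist x z \<longrightarrow> f z = 0) \<and> 0 < T f y)"

lemma T_vanishes_far:
  assumes u: "u \<in> AX" "\<forall>z. 0 \<le> u z" "\<forall>z. \<rho> \<le> dist y z \<longrightarrow> T u z = 0"
    and a: "a \<in> AX" "\<forall>z. 0 \<le> a z" "\<forall>z. a z \<noteq> 0 \<longrightarrow> u z \<noteq> 0"
    and far: "\<rho> < dist y y'"
  shows "T a y' = 0"
proof -
  have near: "\<forall>z. dist y' z < dist y y' - \<rho> \<longrightarrow> T u z = 0"
  proof (intro allI impI)
    fix z assume "dist y' z < dist y y' - \<rho>"
    moreover have "dist y y' \<le> dist y z + dist y' z"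
      using dist_triangle[of y y' z] by (simp add: dist_commute)
    ultimately have "\<rho> \<le> dist y z" by simp
    then show "T u z = 0" using u(3) by blast
  qed
  show ?thesis using T_vanishes_of_support_subset[OF u(1,2) a _ near] far by simp
qed

text \<open>Otherwise a bump \<open>a \<le> 2 f\<close> at \<open>x\<close> inside \<open>{u > 0}\<close> would satisfy \<open>T a \<le> T (1/2)\<close>:
  near \<open>y\<close> by assumption, and away from \<open>y\<close> because \<open>T u\<close> vanishes there.\<close>
lemma exists_large_value_near:
  assumes u: "u \<in> AX" "\<forall>z. 0 \<le> u z" "0 < u x" "\<forall>z. \<rho> \<le> dist y z \<longrightarrow> T u z = 0"
    and f: "f \<in> AX" "\<forall>z. 0 \<le> f z" "1 \<le> f x"
  shows "\<exists>y'. dist y y' \<le> \<rho> \<and> weight y' / 4 < T f y'"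
proof (rule ccontr)
  assume "\<not> ?thesis"
  then have small: "T f y' \<le> weight y' / 4" if "dist y y' \<le> \<rho>" for y'
    using that by (meson not_le)
  let ?V = "{z. 1/2 < f z} \<inter> {z. 0 < u z}"
  have V: "open ?V" using adequate_continuous[OF AX f(1)] adequate_continuous[OF AX u(1)]
    by (intro open_Int open_Collect_less) (auto intro: continuous_on_const)
  have "x \<in> ?V" using u(3) f(3) by simp
  then obtain a where a: "a \<in> AX" "\<forall>z. 0 \<le> a z \<and> a z \<le> 1" "a x = 1" "\<forall>z. z \<notin> ?V \<longrightarrow> a z = 0"
    using adequate_bump[OF AX V] by blast
  have "a z \<le> 2 * f z" for z
  proof (cases "z \<in> ?V")
    case True
    then have "1/2 < f z" by simp
    moreover have "a z \<le> 1" using a(2) by blast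
    ultimately show ?thesis by linarith
  next
    case False
    then show ?thesis using a(4) f(2) by simp
  qed
  then have "\<forall>y. T a y \<le> T (\<lambda>x. 2 * f x) y"
    using order_iso_le_iff[OF AX T a(1) adequate_scale[OF AX f(1)]] by blast
  then have Ta: "T a y' \<le> 2 * T f y'" for y'
    using order_iso_scale[OF T f(1), of 2] by simp
  have "T a y' \<le> T (\<lambda>_. 1/2) y'" for y'
  proof (cases "dist y y' \<le> \<rho>")
    case True
    then show ?thesis using Ta[of y'] small[OF True] T_const[of "1/2"] by simp
  next
    case False
    have "\<forall>z. a z \<noteq> 0 \<longrightarrow> u z \<noteq> 0" using a(4) by force
    then have "T a y' = 0" using T_vanishes_far[OF u(1,2,4) a(1)] a(2) False by auto
    then show ?thesis using T_const[of "1/2"] less_imp_le[OF weight_pos] by simp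
  qed
  then have "a x \<le> 1/2"
    using order_iso_le_iff[OF AX T a(1) adequate_const[OF AX]] by blast
  then show False using a(3) by simp
qed

lemma exists_preimage_of_bump:
  assumes "0 < r"
  shows "\<exists>u x. u \<in> AX \<and> (\<forall>z. 0 \<le> u z) \<and> 0 < u x \<and> (\<forall>z. r \<le> dist y z \<longrightarrow> T u z = 0)"
proof -
  obtain g where g: "g \<in> AY" "\<forall>z. 0 \<le> g z" "g y = 1" "\<forall>z. z \<notin> ball y r \<longrightarrow> g z = 0"
    using adequate_bump[OF AY, of "ball y r" y] assms by auto
  obtain u where u: "u \<in> AX" "T u = g" using order_iso_surj[OF T g(1)] by blast
  have u_nonneg: "\<forall>z. 0 \<le> u z" using order_iso_nonneg_iff[OF T u(1)] u(2) g(2) by simp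
  have "u \<noteq> (\<lambda>_. 0)" using u(2) g(3) order_iso_zero[OF AX T] by auto
  then obtain x where "u x \<noteq> 0" by fastforce
  then have "0 < u x" using u_nonneg by (simp add: order_less_le)
  then show ?thesis using u u_nonneg g(4) by auto
qed

lemma T_ge_of_frequently_large:
  assumes u: "\<And>m. u m \<in> AX" "\<And>m z. 0 \<le> u m z" "\<And>m. 0 < u m (xs m)"
      "\<And>m z. \<rho> m \<le> dist y z \<Longrightarrow> T (u m) z = 0"
    and \<rho>: "\<rho> \<longlonglongrightarrow> 0"
    and f: "f \<in> AX" "\<forall>z. 0 \<le> f z" "\<exists>\<^sub>F m in sequentially. 1 \<le> f (xs m)"
  shows "weight y / 4 \<le> T f y"
proof -
  let ?C = "{y'. weight y' / 4 \<le> T f y'}"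
  have "closed ?C"
    using T_continuous[OF f(1)] T_continuous[OF adequate_const[OF AX]]
    by (intro closed_Collect_le continuous_intros) auto
  moreover have "y \<in> closure ?C" unfolding closure_approachable
  proof (intro allI impI)
    fix \<epsilon> :: real assume "0 < \<epsilon>"
    then have "\<forall>\<^sub>F m in sequentially. \<rho> m < \<epsilon>" using order_tendstoD(2)[OF \<rho>] by blast
    with f(3) have "\<exists>\<^sub>F m in sequentially. 1 \<le> f (xs m) \<and> \<rho> m < \<epsilon>"
      by (rule frequently_eventually_frequently)
    then obtain m where m: "1 \<le> f (xs m)" "\<rho> m < \<epsilon>" using frequently_ex by blast
    have "u m \<in> AX" "\<forall>z. 0 \<le> u m z" "0 < u m (xs m)" "\<forall>z. \<rho> m \<le> dist y z \<longrightarrow> T (u m) z = 0"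
      using u by auto
    then obtain y' where "dist y y' \<le> \<rho> m" "weight y' / 4 < T f y'"
      using exists_large_value_near[OF _ _ _ _ f(1,2) m(1)] by blast
    then show "\<exists>y'\<in>?C. dist y' y < \<epsilon>"
      using m(2) by (intro bexI[of _ y']) (auto simp: dist_commute)
  qed
  ultimately show ?thesis using closure_closed by auto
qed

lemma support_point_of_cluster_point:
  assumes pos: "\<And>f. f \<in> AX \<Longrightarrow> \<forall>z. 0 \<le> f z \<Longrightarrow> \<exists>\<^sub>F m in sequentially. 1 \<le> f (xs m) \<Longrightarrow> 0 < T f y"
    and x: "\<forall>r>0. \<exists>\<^sub>F m in sequentially. dist x (xs m) < r"
  shows "support_point x y"
  unfolding support_point_def
proof (intro allI impI)
  fix r :: real assume "0 < r"
  then obtain b s where b: "b \<in> AX" "\<forall>z. 0 \<le> b z \<and> b z \<le> 1" "\<forall>z. z \<notin> ball x r \<longrightarrow> b z = 0"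
      and s: "0 < s" "\<forall>z. dist x z < s \<longrightarrow> b z = 1"
    using adequate_bump[OF AX, of "ball x r" x] by auto
  have "\<exists>\<^sub>F m in sequentially. 1 \<le> b (xs m)"
    using frequently_elim1[OF x[rule_format, OF s(1)]] s(2) by simp
  then have "0 < T b y" using pos b(1,2) by blast
  moreover have "\<forall>z. r \<le> dist x z \<longrightarrow> b z = 0" using b(3) by auto
  ultimately show "\<exists>f\<in>AX. (\<forall>z. 0 \<le> f z) \<and> (\<forall>z. r \<le> dist x z \<longrightarrow> f z = 0) \<and> 0 < T f y"
    using b(1,2) by blast
qed

text \<open>Without a cluster point, condition (a) or (b) yields two disjointly supported
  functions, each frequently \<open>\<ge> 1\<close> along \<open>xs\<close>; their images cannot both be positive at \<open>y\<close>.\<close>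
lemma cluster_point_exists:
  assumes pos: "\<And>f. f \<in> AX \<Longrightarrow> \<forall>z. 0 \<le> f z \<Longrightarrow> \<exists>\<^sub>F m in sequentially. 1 \<le> f (xs m) \<Longrightarrow> 0 < T f y"
    and C: "cond_a_or_b AX"
  shows "\<exists>x. \<forall>r>0. \<exists>\<^sub>F m in sequentially. dist x (xs m) < r"
proof (rule ccontr)
  assume "\<not> ?thesis"
  then have "no_cluster_point xs" unfolding no_cluster_point_def by (simp add: not_frequently not_less)
  then obtain f where "f \<in> AX" "\<exists>\<^sub>F m in sequentially. f (xs m) = 1" "\<exists>\<^sub>F m in sequentially. f (xs m) = 0"
    using cond_a_or_b_oscillating[OF AX C] by blast
  then obtain f1 f2 where f: "f1 \<in> AX" "f2 \<in> AX" "\<forall>z. 0 \<le> f1 z" "\<forall>z. 0 \<le> f2 z"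
      "\<forall>z. f1 z = 0 \<or> f2 z = 0" "\<exists>\<^sub>F m in sequentially. 1 \<le> f1 (xs m)"
      "\<exists>\<^sub>F m in sequentially. 1 \<le> f2 (xs m)"
    by (rule disjoint_pair_of_oscillating[OF AX])
  have "0 < T f1 y" "0 < T f2 y" using pos f by blast+
  then show False using order_iso_disjoint[OF AX AY T f(1,3,2,4,5), of y] by simp
qed

lemma exists_support_point:
  assumes "cond_a_or_b AX"
  shows "\<exists>x. support_point x y"
proof -
  define \<rho> where "\<rho> m = inverse (real (Suc m))" for m
  have "\<forall>m. \<exists>u x. u \<in> AX \<and> (\<forall>z. 0 \<le> u z) \<and> 0 < u x \<and> (\<forall>z. \<rho> m \<le> dist y z \<longrightarrow> T u z = 0)"
    using exists_preimage_of_bump by (simp add: \<rho>_def)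
  then obtain u xs where u: "\<And>m. u m \<in> AX" "\<And>m z. 0 \<le> u m z" "\<And>m. 0 < u m (xs m)"
      "\<And>m z. \<rho> m \<le> dist y z \<Longrightarrow> T (u m) z = 0"
    by metis
  have "0 < T f y" if "f \<in> AX" "\<forall>z. 0 \<le> f z" "\<exists>\<^sub>F m in sequentially. 1 \<le> f (xs m)" for f
    using T_ge_of_frequently_large[OF u _ that] LIMSEQ_inverse_real_of_nat weight_pos[of y]
    unfolding \<rho>_def by fastforce
  then show ?thesis using support_point_of_cluster_point cluster_point_exists[OF _ assms] by metis
qed

lemma T_zero_of_vanishing_near_support:
  assumes S: "support_point x y" and p: "p \<in> AX" "\<forall>z. 0 \<le> p z"
    and r: "0 < r" "\<forall>z. dist x z < r \<longrightarrow> p z = 0"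
  shows "T p y = 0"
proof -
  obtain f where f: "f \<in> AX" "\<forall>z. 0 \<le> f z" "\<forall>z. r \<le> dist x z \<longrightarrow> f z = 0" "0 < T f y"
    using S r(1) unfolding support_point_def by blast
  have "\<forall>z. p z = 0 \<or> f z = 0" using r(2) f(3) by (meson not_le)
  then have "T p y = 0 \<or> T f y = 0" using order_iso_disjoint[OF AX AY T p f(1,2)] by blast
  then show ?thesis using f(4) by simp
qed

lemma T_nonpos_of_negative_at_support:
  assumes S: "support_point x y" and w: "w \<in> AX" "w x < 0" "\<forall>z. w z \<le> M"
  shows "T w y \<le> 0"
proof -
  have "open {z. w z < 0}"
    using adequate_continuous[OF AX w(1)] by (intro open_Collect_less) (auto intro: continuous_on_const)
  moreover have "x \<in> {z. w z < 0}" using w(2) by simp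
  ultimately obtain b s where b: "b \<in> AX" "\<forall>z. 0 \<le> b z \<and> b z \<le> 1" "\<forall>z. z \<notin> {z. w z < 0} \<longrightarrow> b z = 0"
      and s: "0 < s" "\<forall>z. dist x z < s \<longrightarrow> b z = 1"
    using adequate_bump[OF AX] by blast
  define p where "p z = (- max M 0) * b z + max M 0" for z
  have p: "p \<in> AX" unfolding p_def by (rule adequate_affine[OF AX b(1)])
  have p_nonneg: "0 \<le> p z" for z
    using b(2) mult_left_le_one_le[of "max M 0" "b z"] by (simp add: p_def algebra_simps)
  have "w z \<le> p z" for z
  proof (cases "0 \<le> w z")
    case True
    then show ?thesis using b(3) w(3)[rule_format, of z] by (simp add: p_def not_less)
  next
    case False
    then show ?thesis using p_nonneg[of z] by linarith
  qed
  then have "T w y \<le> T p y" using order_iso_le_iff[OF AX T w(1) p] by blast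
  also have "T p y = 0"
    using T_zero_of_vanishing_near_support[OF S p _ s(1)] p_nonneg s(2) by (simp add: p_def)
  finally show ?thesis .
qed

lemma T_eq_at_support_point:
  assumes S: "support_point x y" and f: "f \<in> bounded_part AX"
  shows "T f y = weight y * f x"
proof -
  obtain M where M: "\<forall>z. \<bar>f z\<bar> \<le> M" and fA: "f \<in> AX"
    using f unfolding bounded_part_def bounded_iff by auto
  have "T f y / weight y \<le> c" if "f x < c" for c
  proof -
    have "T (\<lambda>z. f z - c) y \<le> 0"
      using T_nonpos_of_negative_at_support[OF S adequate_diff[OF AX fA adequate_const[OF AX, of c]], of "M - c"]
        that M by (auto simp: abs_le_iff)
    then have "T f y \<le> c * weight y"
      using order_iso_diff[OF AX T fA adequate_const[OF AX]] T_const[of c] by simp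
    then show ?thesis by (simp add: pos_divide_le_eq[OF weight_pos])
  qed
  then have "T f y / weight y \<le> f x" by (rule dense_ge)
  moreover have "c \<le> T f y / weight y" if "c < f x" for c
  proof -
    have "T (\<lambda>z. c - f z) y \<le> 0"
      using T_nonpos_of_negative_at_support[OF S adequate_diff[OF AX adequate_const[OF AX, of c] fA], of "c + M"]
        that M by (auto simp: abs_le_iff)
    then have "c * weight y \<le> T f y"
      using order_iso_diff[OF AX T adequate_const[OF AX] fA] T_const[of c] by simp
    then show ?thesis by (simp add: pos_le_divide_eq[OF weight_pos])
  qed
  then have "f x \<le> T f y / weight y" by (rule dense_le)
  ultimately show ?thesis using weight_pos[of y] by (simp add: divide_eq_eq mult.commute)
qed

lemma T_ge_at_support_point:
  assumes S: "support_point x y" and f: "f \<in> AX" "\<forall>z. 0 \<le> f z"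
  shows "weight y * f x \<le> T f y"
proof -
  have "0 \<le> T f y" using order_iso_nonneg_iff[OF T f(1)] f(2) by blast
  then have "0 \<le> T f y / weight y" using less_imp_le[OF weight_pos] by simp
  have "c \<le> T f y / weight y" if c: "0 < c" "c < f x" for c
  proof -
    have "open {z. c < f z}"
      using adequate_continuous[OF AX f(1)] by (intro open_Collect_less) (auto intro: continuous_on_const)
    moreover have "x \<in> {z. c < f z}" using c(2) by simp
    ultimately obtain b where b: "b \<in> AX" "\<forall>z. 0 \<le> b z \<and> b z \<le> 1" "b x = 1"
        "\<forall>z. z \<notin> {z. c < f z} \<longrightarrow> b z = 0"
      using adequate_bump[OF AX] by blast
    have cb: "(\<lambda>z. c * b z) \<in> bounded_part AX"
      using b(2) c(1) by (intro bounded_partI[OF adequate_scale[OF AX b(1)], of _ c]) (simp add: abs_mult)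
    have "c * b z \<le> f z" for z
    proof (cases "c < f z")
      case True
      moreover have "c * b z \<le> c" using b(2) c(1) by (simp add: mult_left_le)
      ultimately show ?thesis by linarith
    next
      case False
      then show ?thesis using b(4) f(2) by simp
    qed
    then have "T (\<lambda>z. c * b z) y \<le> T f y"
      using order_iso_le_iff[OF AX T adequate_scale[OF AX b(1)] f(1)] by blast
    then show ?thesis
      using T_eq_at_support_point[OF S cb] b(3) by (simp add: pos_le_divide_eq[OF weight_pos] mult.commute)
  qed
  then have "c \<le> T f y / weight y" if "c < f x" for c
    using that \<open>0 \<le> T f y / weight y\<close> by (cases "0 < c") auto
  then have "f x \<le> T f y / weight y" by (rule dense_le)
  then show ?thesis by (simp add: pos_le_divide_eq[OF weight_pos] mult.commute)
qed

lemma support_map_continuous: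
  assumes k: "\<forall>y. support_point (k y) y"
  shows "continuous_on UNIV k"
  unfolding continuous_on_iff
proof (intro ballI allI impI)
  fix y :: 'b and \<epsilon> :: real assume "0 < \<epsilon>"
  then obtain b where b: "b \<in> AX" "\<forall>z. 0 \<le> b z \<and> b z \<le> 1" "b (k y) = 1"
      "\<forall>z. z \<notin> ball (k y) \<epsilon> \<longrightarrow> b z = 0"
    using adequate_bump[OF AX, of "ball (k y) \<epsilon>" "k y"] by auto
  have "b \<in> bounded_part AX" using b(1,2) by (intro bounded_partI[of _ _ 1]) auto
  then have Tb: "T b y' = weight y' * b (k y')" for y'
    using T_eq_at_support_point k by blast
  have "0 < T b y" using Tb[of y] b(3) weight_pos[of y] by simp
  then obtain d where d: "0 < d" "\<forall>y'. dist y' y < d \<longrightarrow> dist (T b y') (T b y) < T b y"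
    using T_continuous[OF b(1)] unfolding continuous_on_iff by blast
  have "dist (k y') (k y) < \<epsilon>" if "dist y' y < d" for y'
  proof -
    have "0 < T b y'" using d(2) that by (auto simp: dist_real_def abs_if split: if_splits)
    then have "b (k y') \<noteq> 0" using Tb[of y'] by auto
    then show ?thesis using b(4) by (auto simp: dist_commute)
  qed
  then show "\<exists>d>0. \<forall>y'\<in>UNIV. dist y' y < d \<longrightarrow> dist (k y') (k y) < \<epsilon>" using d(1) by blast
qed

lemma exists_support_map:
  assumes "cond_a_or_b AX"
  obtains k where "continuous_on UNIV k" "\<forall>f\<in>bounded_part AX. \<forall>y. T f y = weight y * f (k y)"
    "\<forall>f\<in>AX. (\<forall>z. 0 \<le> f z) \<longrightarrow> (\<forall>y. weight y * f (k y) \<le> T f y)"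
proof
  define k where "k y = (SOME x. support_point x y)" for y
  have k: "support_point (k y) y" for y
    unfolding k_def using exists_support_point[OF assms] by (rule someI_ex)
  show "continuous_on UNIV k" using k support_map_continuous by blast
  show "\<forall>f\<in>bounded_part AX. \<forall>y. T f y = weight y * f (k y)"
    using T_eq_at_support_point[OF k] by blast
  show "\<forall>f\<in>AX. (\<forall>z. 0 \<le> f z) \<longrightarrow> (\<forall>y. weight y * f (k y) \<le> T f y)"
    using T_ge_at_support_point[OF k] by blast
qed

end

section \<open>Weighted composition\<close>

lemma weight_mul_inverse_weight:
  assumes "adequate AY" and ST: "\<forall>g\<in>bounded_part AY. S g \<in> bounded_part AX \<and> T (S g) = g"
    and k: "\<forall>f\<in>bounded_part AX. \<forall>y. T f y = T (\<lambda>_. 1) y * f (k y)"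
  shows "T (\<lambda>_. 1) y * S (\<lambda>_. 1) (k y) = 1"
proof -
  have "(\<lambda>_. 1) \<in> bounded_part AY" by (intro bounded_partI[OF adequate_const[OF assms(1)], of _ 1]) simp
  then show ?thesis using ST k by metis
qed

lemma weighted_compositions_inverse:
  assumes "adequate AY" and ST: "\<forall>g\<in>bounded_part AY. S g \<in> bounded_part AX \<and> T (S g) = g"
    and k: "\<forall>f\<in>bounded_part AX. \<forall>y. T f y = T (\<lambda>_. 1) y * f (k y)"
    and h: "\<forall>g\<in>bounded_part AY. \<forall>x. S g x = S (\<lambda>_. 1) x * g (h x)"
  shows "h (k y) = y"
proof (rule ccontr)
  assume "h (k y) \<noteq> y"
  then obtain g where g: "g \<in> AY" "\<forall>z. 0 \<le> g z \<and> g z \<le> 1" "g y = 1" "g (h (k y)) = 0"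
    using adequate_bump[OF assms(1), of "- {h (k y)}" y] by auto
  then have "g \<in> bounded_part AY" by (intro bounded_partI[of _ _ 1]) auto
  then have "g y = T (\<lambda>_. 1) y * (S (\<lambda>_. 1) (k y) * g (h (k y)))" using ST k h by metis
  then show False using g(3,4) by simp
qed

lemma weighted_composition_of_lower_bounds:
  assumes AX: "adequate AX" and T: "order_iso AX AY T"
    and T_low: "\<forall>f\<in>AX. (\<forall>z. 0 \<le> f z) \<longrightarrow> (\<forall>y. T (\<lambda>_. 1) y * f (k y) \<le> T f y)"
    and S_low: "\<forall>g\<in>AY. (\<forall>z. 0 \<le> g z) \<longrightarrow> (\<forall>x. S (\<lambda>_. 1) x * g (h x) \<le> S g x)"
    and ST: "\<forall>f\<in>AX. S (T f) = f" and hk: "\<forall>y. h (k y) = y"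
    and unit: "\<forall>y. T (\<lambda>_. 1) y * S (\<lambda>_. 1) (k y) = 1"
    and f: "f \<in> AX"
  shows "T f = (\<lambda>y. T (\<lambda>_. 1) y * f (k y))"
proof -
  have nonneg: "T u y = T (\<lambda>_. 1) y * u (k y)" if u: "u \<in> AX" "\<forall>z. 0 \<le> u z" for u y
  proof -
    \<comment> \<open>the two lower bounds squeeze \<open>T u y\<close> since the weights are reciprocal\<close>
    have "\<forall>z. 0 \<le> T u z" using order_iso_nonneg_iff[OF T u(1)] u(2) by blast
    then have "S (\<lambda>_. 1) (k y) * T u y \<le> u (k y)"
      using S_low order_iso_in[OF T u(1)] ST u(1) hk by metis
    then have "T (\<lambda>_. 1) y * (S (\<lambda>_. 1) (k y) * T u y) \<le> T (\<lambda>_. 1) y * u (k y)"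
      using order_iso_nonneg_iff[OF T adequate_const[OF AX, of 1]] by (simp add: mult_left_mono)
    then have "T u y \<le> T (\<lambda>_. 1) y * u (k y)" using unit by (simp add: mult.assoc[symmetric])
    moreover have "T (\<lambda>_. 1) y * u (k y) \<le> T u y" using T_low u by blast
    ultimately show ?thesis by simp
  qed
  obtain u v where uv: "u \<in> AX" "v \<in> AX" "\<forall>x. 0 \<le> u x" "\<forall>x. 0 \<le> v x" "f = (\<lambda>x. u x - v x)"
    using adequate_decompose[OF AX f] by blast
  then have "T f = (\<lambda>y. T u y - T v y)" using order_iso_diff[OF AX T uv(1,2)] by simp
  also have "\<dots> = (\<lambda>y. T (\<lambda>_. 1) y * f (k y))" using nonneg uv by (simp add: right_diff_distrib)
  finally show ?thesis .
qed

theorem theorem4p4: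
  fixes AX :: "('a::metric_space \<Rightarrow> real) set"
    and AY :: "('b::metric_space \<Rightarrow> real) set"
    and T :: "('a \<Rightarrow> real) \<Rightarrow> ('b \<Rightarrow> real)"
  assumes "adequate AX" and "cond_a_or_b AX"
    and "adequate AY" and "cond_a_or_b AY"
    and "order_iso AX AY T"
    and "T ` bounded_part AX = bounded_part AY"
  shows "\<exists>h k. homeomorphism (UNIV::'a set) (UNIV::'b set) h k \<and>
    (\<forall>f\<in>AX. T f = (\<lambda>y. T (\<lambda>_. 1) y * f (k y))) \<and>
    (\<forall>g\<in>AY. inv_into AX T g = (\<lambda>x. inv_into AX T (\<lambda>_. 1) x * g (h x)))"
proof -
  interpret XY: adequate_order_iso AX AY T using assms by unfold_locales
  interpret YX: adequate_order_iso AY AX "inv_into AX T" by (rule XY.inv_into_adequate_order_iso)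
  obtain k where k: "continuous_on UNIV k" "\<forall>f\<in>bounded_part AX. \<forall>y. T f y = T (\<lambda>_. 1) y * f (k y)"
      "\<forall>f\<in>AX. (\<forall>z. 0 \<le> f z) \<longrightarrow> (\<forall>y. T (\<lambda>_. 1) y * f (k y) \<le> T f y)"
    by (rule XY.exists_support_map[OF assms(2)])
  obtain h where h: "continuous_on UNIV h"
      "\<forall>g\<in>bounded_part AY. \<forall>x. inv_into AX T g x = inv_into AX T (\<lambda>_. 1) x * g (h x)"
      "\<forall>g\<in>AY. (\<forall>z. 0 \<le> g z) \<longrightarrow> (\<forall>x. inv_into AX T (\<lambda>_. 1) x * g (h x) \<le> inv_into AX T g x)"
    by (rule YX.exists_support_map[OF assms(4)])
  have hk: "\<forall>y. h (k y) = y"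
    using weighted_compositions_inverse[OF assms(3) XY.bounded_part_preimage k(2) h(2)] by blast
  have kh: "\<forall>x. k (h x) = x"
    using weighted_compositions_inverse[OF assms(1) XY.bounded_part_image h(2) k(2)] by blast
  have "\<forall>f\<in>AX. T f = (\<lambda>y. T (\<lambda>_. 1) y * f (k y))"
    using weighted_composition_of_lower_bounds[OF assms(1,5) k(3) h(3) _ hk]
      weight_mul_inverse_weight[OF assms(3) XY.bounded_part_preimage k(2)]
      order_iso_inv_into_apply[OF assms(5)] by blast
  moreover have "\<forall>g\<in>AY. inv_into AX T g = (\<lambda>x. inv_into AX T (\<lambda>_. 1) x * g (h x))"
    using weighted_composition_of_lower_bounds[OF assms(3) YX.T h(3) k(3) _ kh]
      weight_mul_inverse_weight[OF assms(1) XY.bounded_part_image h(2)]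
      order_iso_inv_into_inverse[OF assms(5)] by blast
  moreover have "homeomorphism UNIV UNIV h k" using h(1) k(1) hk kh by (intro homeomorphismI) auto
  ultimately show ?thesis by blast
qed

end
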